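(* Let $(N,\langle\cdot,\cdot\rangle,\varphi)$ be a modified $H$-type group (see context). Let $z,z'\in\mathfrak z$ and $e,e'\in\mathfrak v$ be pseudo-orthonormal, i.e. $\langle z,z\rangle,\langle z',z'\rangle,\langle e,e\rangle,\langle e',e'\rangle\in\{\pm1\}$, $\langle z,z'\rangle=0$ and $\langle e,e'\rangle=0$. Then the sectional curvatures satisfy $$K(z,z')=0,\qquad K(z,e)=\tfrac14\,\varepsilon_z\,\varphi(z),\qquad K(e,e')=-\tfrac34\,\varepsilon_e\,\varepsilon_{e'}\,\langle [e,e'],[e,e']\rangle,$$ where $\varepsilon_u=\langle u,u\rangle=\pm1$ for $u\in\{z,e,e'\}$.
   Context: Let $N$ be a 2-step nilpotent real Lie group with Lie algebra $\mathfrak n$, Lie bracket $[\cdot,\cdot]$ and center $\mathfrak z$, endowed with a left-invariant pseudo-Riemannian metric $\langle\cdot,\cdot\rangle$ (identified with an inner product on $\mathfrak n$) for which $\mathfrak z$ is nondegenerate. Put $\mathfrak v=\mathfrak z^\perp$, so $\mathfrak n=\mathfrak z\oplus\mathfrak v$ orthogonally. For $z\in\mathfrak z$ define the skew-adjoint endomorphism $j(z)$ of $\mathfrak v$ by $\langle [x,y],z\rangle=\langle y,j(z)x\rangle$ for all $x,y\in\mathfrak v$. Given a quadratic form $\varphi$ on $\mathfrak z$, the triple $(N,\langle\cdot,\cdot\rangle,\varphi)$ is called a modified $H$-type group if $\langle j(z)x,j(z)y\rangle=\varphi(z)\langle x,y\rangle$ for all $z\in\mathfrak z$, $x,y\in\mathfrak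 v$; equivalently $j(z)^2=-\varphi(z)\,\mathrm{Id}_{\mathfrak v}$ for all $z\in\mathfrak z$. ($\varphi$ may be indefinite or degenerate.) Sectional curvature of a nondegenerate plane spanned by $u,w$ is $K(u,w)=\langle R(u,w)w,u\rangle/(\langle u,u\rangle\langle w,w\rangle-\langle u,w\rangle^2)$ for the Levi-Civita curvature tensor $R$. *)

theory Defs
  imports "HOL-Analysis.Analysis"
begin

text \<open>Algebraic model of a simply connected Lie group with left-invariant
pseudo-Riemannian metric: the Lie algebra n is a finite-dimensional real
vector space (type 'a :: euclidean_space; its own Euclidean inner product is
never used), the metric is a nondegenerate symmetric bilinear form g, and
br is the Lie bracket.\<close>

definition lie_bracket :: "('a::real_vector \<Rightarrow> 'a \<Rightarrow> 'a) \<Rightarrow> bool" where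
  "lie_bracket br \<longleftrightarrow> bilinear br \<and> (\<forall>x. br x x = 0) \<and>
     (\<forall>x y w. br x (br y w) + br y (br w x) + br w (br x y) = 0)"

definition two_step_nilpotent :: "('a::real_vector \<Rightarrow> 'a \<Rightarrow> 'a) \<Rightarrow> bool" where
  "two_step_nilpotent br \<longleftrightarrow> (\<forall>x y w. br (br x y) w = 0) \<and> (\<exists>x y. br x y \<noteq> 0)"

definition pseudo_metric :: "('a::real_vector \<Rightarrow> 'a \<Rightarrow> real) \<Rightarrow> bool" where
  "pseudo_metric g \<longleftrightarrow> bilinear g \<and> (\<forall>x y. g x y = g y x) \<and>
     (\<forall>x. (\<forall>y. g x y = 0) \<longrightarrow> x = 0)"

definition center :: "('a::real_vector \<Rightarrow> 'a \<Rightarrow> 'a) \<Rightarrow> 'a set" where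
  "center br = {z. \<forall>x. br z x = 0}"

definition vpart :: "('a::real_vector \<Rightarrow> 'a \<Rightarrow> real) \<Rightarrow> ('a \<Rightarrow> 'a \<Rightarrow> 'a) \<Rightarrow> 'a set" where
  "vpart g br = {x. \<forall>z\<in>center br. g x z = 0}"

definition nondegenerate_on :: "('a::real_vector \<Rightarrow> 'a \<Rightarrow> real) \<Rightarrow> 'a set \<Rightarrow> bool" where
  "nondegenerate_on g S \<longleftrightarrow> (\<forall>x\<in>S. (\<forall>y\<in>S. g x y = 0) \<longrightarrow> x = 0)"

definition is_j :: "('a::real_vector \<Rightarrow> 'a \<Rightarrow> real) \<Rightarrow> ('a \<Rightarrow> 'a \<Rightarrow> 'a) \<Rightarrow> ('a \<Rightarrow> 'a \<Rightarrow> 'a) \<Rightarrow> bool" where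
  "is_j g br j \<longleftrightarrow>
     (\<forall>z\<in>center br. \<forall>x\<in>vpart g br. j z x \<in> vpart g br) \<and>
     (\<forall>z\<in>center br. \<forall>x\<in>vpart g br. \<forall>y\<in>vpart g br. g (br x y) z = g y (j z x))"

definition quadratic_form_on :: "'a::real_vector set \<Rightarrow> ('a \<Rightarrow> real) \<Rightarrow> bool" where
  "quadratic_form_on S \<phi> \<longleftrightarrow>
     (\<exists>B::'a \<Rightarrow> 'a \<Rightarrow> real. bilinear B \<and> (\<forall>x y. B x y = B y x) \<and> (\<forall>z\<in>S. \<phi> z = B z z))"

definition modified_H_type ::
  "('a::euclidean_space \<Rightarrow> 'a \<Rightarrow> real) \<Rightarrow> ('a \<Rightarrow> 'a \<Rightarrow> 'a) \<Rightarrow> ('a \<Rightarrow> real) \<Rightarrow> bool" where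
  "modified_H_type g br \<phi> \<longleftrightarrow>
     lie_bracket br \<and> two_step_nilpotent br \<and> pseudo_metric g \<and>
     nondegenerate_on g (center br) \<and> quadratic_form_on (center br) \<phi> \<and>
     (\<exists>j. is_j g br j \<and>
        (\<forall>z\<in>center br. \<forall>x\<in>vpart g br. \<forall>y\<in>vpart g br.
            g (j z x) (j z y) = \<phi> z * g x y))"

text \<open>Levi-Civita connection on left-invariant vector fields (Koszul formula):
  2 g (nabla x y) w = g [x,y] w - g [y,w] x + g [w,x] y.\<close>
definition lc_conn :: "('a::real_vector \<Rightarrow> 'a \<Rightarrow> real) \<Rightarrow> ('a \<Rightarrow> 'a \<Rightarrow> 'a) \<Rightarrow> 'a \<Rightarrow> 'a \<Rightarrow> 'a" where
  "lc_conn g br x y = (THE u. \<forall>w. 2 * g u w = g (br x y) w - g (br y w) x + g (br w x) y)"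

definition curv :: "('a::real_vector \<Rightarrow> 'a \<Rightarrow> real) \<Rightarrow> ('a \<Rightarrow> 'a \<Rightarrow> 'a) \<Rightarrow> 'a \<Rightarrow> 'a \<Rightarrow> 'a \<Rightarrow> 'a" where
  "curv g br x y w = lc_conn g br x (lc_conn g br y w) - lc_conn g br y (lc_conn g br x w)
                     - lc_conn g br (br x y) w"

definition sec_curv :: "('a::real_vector \<Rightarrow> 'a \<Rightarrow> real) \<Rightarrow> ('a \<Rightarrow> 'a \<Rightarrow> 'a) \<Rightarrow> 'a \<Rightarrow> 'a \<Rightarrow> real" where
  "sec_curv g br u w = g (curv g br u w w) u / (g u u * g w w - (g u w)^2)"

end

theory Submission
  imports Defs
begin

text \<open>All three numerators come from the Koszul formula for left-invariant fields.
Brackets are central and \<open>v\<close> is orthogonal to the centre, so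
\<open>\<nabla>\<^sub>z z' = 0\<close> for central \<open>z, z'\<close>, \<open>\<nabla>\<^sub>x x = 0\<close> for \<open>x \<in> v\<close>, and
\<open>\<nabla>\<^sub>z x\<close> pairs with \<open>j(z) x\<close> like \<open>-j(z) x / 2\<close>. Pairing each curvature term
with a single vector then gives \<open>\<langle>R(z,x)x, z\<rangle> = \<langle>j(z)x, j(z)x\<rangle>/4 = \<phi>(z)\<langle>x,x\<rangle>/4\<close>
and \<open>\<langle>R(x,y)y, x\<rangle> = -3\<langle>[x,y],[x,y]\<rangle>/4\<close>; pseudo-orthonormality makes the
denominators \<open>\<plusminus>1\<close>.\<close>

lemma pseudo_metric_represents_linear:
  fixes g :: "'a::euclidean_space \<Rightarrow> 'a \<Rightarrow> real"
  assumes "pseudo_metric g" and "linear L"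
  shows "\<exists>x. g x = L"
proof -
  have bl: "bilinear g" and nondeg: "\<And>x. (\<forall>y. g x y = 0) \<Longrightarrow> x = 0"
    using assms(1) unfolding pseudo_metric_def by auto
  have lin_right: "linear (g x)" for x
    using bl unfolding bilinear_def by auto
  have lin_left: "linear (\<lambda>x. g x y)" for y
    using bl unfolding bilinear_def by auto
  define T where "T x = (\<Sum>b\<in>Basis. g x b *\<^sub>R b)" for x
  have T_Basis: "T x \<bullet> b = g x b" if "b \<in> Basis" for x b
    using that by (simp add: T_def inner_sum_left inner_Basis if_distrib cong: if_cong)
  have "linear T"
    by (rule linearI) (simp_all add: T_def linear_add[OF lin_left] linear_scale[OF lin_left]
        scaleR_add_left sum.distrib scaleR_sum_right)
  moreover have "inj T"
    unfolding linear_injective_0[OF \<open>linear T\<close>]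
  proof (intro allI impI)
    fix x assume "T x = 0"
    then have "g x = (\<lambda>_. 0)"
      by (intro linear_eq_stdbasis[OF lin_right]) (auto simp: T_Basis[symmetric] linear_zero)
    then show "x = 0" by (intro nondeg) simp
  qed
  ultimately obtain x where x: "T x = (\<Sum>b\<in>Basis. L b *\<^sub>R b)"
    by (metis linear_injective_imp_surjective surjE)
  have "g x = L"
  proof (rule linear_eq_stdbasis[OF lin_right \<open>linear L\<close>])
    fix b :: 'a assume "b \<in> Basis"
    then show "g x b = L b"
      by (simp add: T_Basis[symmetric] x inner_sum_left inner_Basis if_distrib cong: if_cong)
  qed
  then show ?thesis ..
qed

locale two_step_metric_lie_algebra =
  fixes g :: "'a::euclidean_space \<Rightarrow> 'a \<Rightarrow> real" and br :: "'a \<Rightarrow> 'a \<Rightarrow> 'a"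
  assumes pseudo_metric: "pseudo_metric g"
    and lie_bracket: "lie_bracket br"
    and br_br: "br (br x y) w = 0"
begin

lemma g_bilinear: "bilinear g"
  and g_sym: "g x y = g y x"
  and g_nondegenerate: "(\<And>w. g u w = 0) \<Longrightarrow> u = 0"
  using pseudo_metric unfolding pseudo_metric_def by auto

lemma br_bilinear: "bilinear br"
  and br_self [simp]: "br x x = 0"
  using lie_bracket unfolding lie_bracket_def by auto

lemma g_zero [simp]: "g 0 w = 0" "g w 0 = 0"
  and g_diff_left [simp]: "g (x - y) w = g x w - g y w"
  and g_minus_left [simp]: "g (- x) w = - g x w"
  by (simp_all add: bilinear_lzero bilinear_rzero bilinear_lsub bilinear_lneg g_bilinear)

lemma br_zero [simp]: "br 0 w = 0" "br w 0 = 0"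
  by (simp_all add: bilinear_lzero bilinear_rzero br_bilinear)

lemma br_antisym: "br y x = - br x y"
proof -
  have "br (x + y) (x + y) = br x x + br x y + br y x + br y y"
    by (simp add: bilinear_ladd bilinear_radd br_bilinear del: br_self)
  then show ?thesis by (simp add: add_eq_0_iff)
qed

lemma br_in_center: "br x y \<in> center br"
  unfolding center_def by (simp add: br_br)

lemma center_br [simp]: "c \<in> center br \<Longrightarrow> br c x = 0"
  unfolding center_def by simp

lemma br_center [simp]: "c \<in> center br \<Longrightarrow> br x c = 0"
  using br_antisym[of c x] by simp

lemma vpart_g_center [simp]: "x \<in> vpart g br \<Longrightarrow> c \<in> center br \<Longrightarrow> g x c = 0"
  and center_g_vpart [simp]: "x \<in> vpart g br \<Longrightarrow> c \<in> center br \<Longrightarrow> g c x = 0"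
  unfolding vpart_def by (auto simp: g_sym[of c x])

lemma lc_conn_koszul:
  "2 * g (lc_conn g br x y) w = g (br x y) w - g (br y w) x + g (br w x) y"
proof -
  let ?K = "\<lambda>w. g (br x y) w - g (br y w) x + g (br w x) y"
  have "linear (\<lambda>w. ?K w / 2)"
    by (rule linearI) (simp_all add: g_bilinear br_bilinear bilinear_radd bilinear_ladd
        bilinear_rmul bilinear_lmul field_simps)
  then obtain u where u: "g u = (\<lambda>w. ?K w / 2)"
    using pseudo_metric_represents_linear[OF pseudo_metric] by blast
  have "\<exists>!u. \<forall>w. 2 * g u w = ?K w"
  proof (rule ex1I)
    show "\<forall>w. 2 * g u w = ?K w" by (simp add: u)
    fix v assume v: "\<forall>w. 2 * g v w = ?K w"
    have "g (v - u) w = 0" for w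
      using v[rule_format, of w] by (simp add: u)
    then show "v = u"
      using g_nondegenerate by fastforce
  qed
  from theI'[OF this] show ?thesis
    unfolding lc_conn_def by blast
qed

lemma lc_conn_eq_0I:
  assumes "\<And>w. g (br x y) w - g (br y w) x + g (br w x) y = 0"
  shows "lc_conn g br x y = 0"
  by (rule g_nondegenerate) (use lc_conn_koszul[of x y] assms in simp)

lemma lc_conn_0_left [simp]: "lc_conn g br 0 y = 0"
  and lc_conn_0_right [simp]: "lc_conn g br x 0 = 0"
  by (simp_all add: lc_conn_eq_0I)

lemma lc_conn_center_center:
  "z \<in> center br \<Longrightarrow> z' \<in> center br \<Longrightarrow> lc_conn g br z z' = 0"
  by (simp add: lc_conn_eq_0I)

lemma lc_conn_vpart_self: "x \<in> vpart g br \<Longrightarrow> lc_conn g br x x = 0"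
  by (simp add: lc_conn_eq_0I br_in_center)

lemma lc_conn_center_in_vpart:
  assumes "z \<in> center br"
  shows "lc_conn g br z x \<in> vpart g br"
  unfolding vpart_def
proof safe
  fix c assume "c \<in> center br"
  then show "g (lc_conn g br z x) c = 0"
    using lc_conn_koszul[of z x c] assms by simp
qed

lemma curv_center:
  assumes "z \<in> center br" "z' \<in> center br" "w \<in> center br"
  shows "curv g br z z' w = 0"
  using assms by (simp add: curv_def lc_conn_center_center)

lemma g_curv_center_vpart:
  assumes "is_j g br j" and z: "z \<in> center br" and x: "x \<in> vpart g br"
  shows "g (curv g br z x x) z = g (j z x) (j z x) / 4"
proof -
  define a where "a = lc_conn g br z x"
  have a: "a \<in> vpart g br"
    unfolding a_def using z by (rule lc_conn_center_in_vpart)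
  have jx: "j z x \<in> vpart g br"
    and br_j: "\<And>y. y \<in> vpart g br \<Longrightarrow> g (br x y) z = g y (j z x)"
    using assms unfolding is_j_def by auto
  have "2 * g a (j z x) = - g (j z x) (j z x)"
    using lc_conn_koszul[of z x "j z x"] br_j[OF jx] z by (simp add: a_def)
  moreover have "2 * g (lc_conn g br x a) z = g a (j z x)"
    using lc_conn_koszul[of x a z] br_j[OF a] z by simp
  moreover have "curv g br z x x = - lc_conn g br x a"
    using z x by (simp add: curv_def lc_conn_vpart_self a_def)
  ultimately show ?thesis by simp
qed

lemma g_curv_vpart_vpart:
  assumes x: "x \<in> vpart g br" and y: "y \<in> vpart g br"
  shows "g (curv g br x y y) x = - 3/4 * g (br x y) (br x y)"
proof -
  define c where "c = br x y"
  define d where "d = lc_conn g br x y"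
  have c: "c \<in> center br"
    unfolding c_def by (rule br_in_center)
  have "2 * g d c = g c c"
    using lc_conn_koszul[of x y c] c by (simp add: c_def d_def)
  moreover have "2 * g (lc_conn g br y d) x = g c d"
    using lc_conn_koszul[of y d x] x y by (simp add: br_in_center c_def)
  moreover have "2 * g (lc_conn g br c y) x = g c c"
    using lc_conn_koszul[of c y x] c by (simp add: br_antisym[of x y] c_def)
  moreover have "curv g br x y y = - lc_conn g br y d - lc_conn g br c y"
    using y by (simp add: curv_def lc_conn_vpart_self c_def d_def)
  ultimately show ?thesis
    unfolding c_def[symmetric] using g_sym[of c d] by simp
qed

end

lemma modified_H_type_two_step:
  "modified_H_type g br \<phi> \<Longrightarrow> two_step_metric_lie_algebra g br"
  unfolding modified_H_type_def two_step_nilpotent_def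
  by (simp add: two_step_metric_lie_algebra_def)

lemma divide_sign_mult:
  fixes a b x :: real
  assumes "a \<in> {1, -1}" and "b \<in> {1, -1}"
  shows "x / (a * b) = a * b * x"
  using assms by auto

theorem theorem3p3:
  fixes g :: "'a::euclidean_space \<Rightarrow> 'a \<Rightarrow> real"
    and br :: "'a \<Rightarrow> 'a \<Rightarrow> 'a"
    and \<phi> :: "'a \<Rightarrow> real"
    and z z' e e' :: 'a
  assumes "modified_H_type g br \<phi>"
    and "z \<in> center br" and "z' \<in> center br"
    and "e \<in> vpart g br" and "e' \<in> vpart g br"
    and "g z z \<in> {1, -1}" and "g z' z' \<in> {1, -1}"
    and "g e e \<in> {1, -1}" and "g e' e' \<in> {1, -1}"
    and "g z z' = 0" and "g e e' = 0"
  shows "sec_curv g br z z' = 0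
    \<and> sec_curv g br z e = 1/4 * g z z * \<phi> z
    \<and> sec_curv g br e e' = - 3/4 * g e e * g e' e' * g (br e e') (br e e')"
proof -
  interpret two_step_metric_lie_algebra g br
    using assms(1) by (rule modified_H_type_two_step)
  obtain j where j: "is_j g br j"
    and j_phi: "\<And>z x y. z \<in> center br \<Longrightarrow> x \<in> vpart g br \<Longrightarrow> y \<in> vpart g br \<Longrightarrow>
                  g (j z x) (j z y) = \<phi> z * g x y"
    using assms(1) unfolding modified_H_type_def by blast
  have "sec_curv g br z z' = 0"
    using assms(2,3) by (simp add: sec_curv_def curv_center)
  moreover have "sec_curv g br z e = 1/4 * g z z * \<phi> z"
  proof -
    have "g (curv g br z e e) z = \<phi> z * g e e / 4"
      using g_curv_center_vpart[OF j assms(2,4)] j_phi assms(2,4) by simp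
    then show ?thesis
      using assms(2,4,6,8) by (auto simp: sec_curv_def divide_sign_mult)
  qed
  moreover have "sec_curv g br e e' = - 3/4 * g e e * g e' e' * g (br e e') (br e e')"
    using assms(4,5,8,9,11)
    by (simp add: sec_curv_def g_curv_vpart_vpart divide_sign_mult)
  ultimately show ?thesis by blast
qed

end
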